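(* Let $r\ge2$, $k\ge3$ and let $\widehat{F}_k$ be an $r$-coloring of $K_k$. If $G$ is an $(r,\widehat{F}_k)$-extremal graph and $u,v\in V(G)$ are non-adjacent vertices, then the graph obtained from $G$ by deleting $v$ and adding a new vertex that is a twin of $u$ (non-adjacent to $u$ and with the same neighborhood as $u$ in $G-v$) is also $(r,\widehat{F}_k)$-extremal.
   Context: An $r$-coloring of a graph assigns colors from $\{1,\dots,r\}$ to edges (not necessarily properly). A copy of $\widehat{F}_k$ in a colored graph is a set of $k$ pairwise adjacent vertices admitting a bijection to $V(K_k)$ under which two edges have equal colors iff their images have equal colors in $\widehat{F}_k$; a coloring is $\widehat{F}_k$-free if it has no copy. $c_{r,\widehat{F}_k}(G)$ is the number of $\widehat{F}_k$-free $r$-colorings of $E(G)$, $c_{r,\widehat{F}_k}(n)$ its maximum over $n$-vertex graphs, and an $n$-vertex graph $G$ is $(r,\widehat{F}_k)$-extremal if $c_{r,\widehat{F}_k}(G)=c_{r,\widehat{F}_k}(n)$. *)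

theory Defs
  imports Main "HOL-Library.FuncSet"
begin

definition simple_graph :: "'a set \<Rightarrow> 'a set set \<Rightarrow> bool" where
  "simple_graph V E \<longleftrightarrow> finite V \<and> E \<subseteq> {e. e \<subseteq> V \<and> card e = 2}"

definition Kk_edges :: "nat \<Rightarrow> nat set set" where
  "Kk_edges k = {e. e \<subseteq> {0..<k} \<and> card e = 2}"

definition pattern_coloring :: "nat \<Rightarrow> nat \<Rightarrow> (nat set \<Rightarrow> nat) \<Rightarrow> bool" where
  "pattern_coloring r k F \<longleftrightarrow> F \<in> Kk_edges k \<rightarrow> {1..r}"

definition has_copy :: "nat \<Rightarrow> (nat set \<Rightarrow> nat) \<Rightarrow> 'a set set \<Rightarrow> ('a set \<Rightarrow> nat) \<Rightarrow> bool" where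
  "has_copy k F E c \<longleftrightarrow>
     (\<exists>S \<phi>. (\<forall>x\<in>S. \<forall>y\<in>S. x \<noteq> y \<longrightarrow> {x, y} \<in> E) \<and>
            bij_betw \<phi> S {0..<k} \<and>
            (\<forall>x\<in>S. \<forall>y\<in>S. \<forall>x'\<in>S. \<forall>y'\<in>S. x \<noteq> y \<longrightarrow> x' \<noteq> y' \<longrightarrow>
               (c {x, y} = c {x', y'} \<longleftrightarrow> F {\<phi> x, \<phi> y} = F {\<phi> x', \<phi> y'})))"

definition free_colorings :: "nat \<Rightarrow> nat \<Rightarrow> (nat set \<Rightarrow> nat) \<Rightarrow> 'a set set \<Rightarrow> ('a set \<Rightarrow> nat) set" where
  "free_colorings r k F E = {c \<in> E \<rightarrow>\<^sub>E {1..r}. \<not> has_copy k F E c}"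

definition c_graph :: "nat \<Rightarrow> nat \<Rightarrow> (nat set \<Rightarrow> nat) \<Rightarrow> 'a set set \<Rightarrow> nat" where
  "c_graph r k F E = card (free_colorings r k F E)"

definition c_num :: "nat \<Rightarrow> nat \<Rightarrow> (nat set \<Rightarrow> nat) \<Rightarrow> nat \<Rightarrow> nat" where
  "c_num r k F n = Max {c_graph r k F E | E :: nat set set. simple_graph {0..<n} E}"

definition extremal :: "nat \<Rightarrow> nat \<Rightarrow> (nat set \<Rightarrow> nat) \<Rightarrow> 'a set \<Rightarrow> 'a set set \<Rightarrow> bool" where
  "extremal r k F V E \<longleftrightarrow> simple_graph V E \<and> c_graph r k F E = c_num r k F (card V)"

text \<open>Delete v and add a twin of u; the new vertex reuses the name v
  (so the vertex set is unchanged).\<close>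
definition twin_replace :: "'a set set \<Rightarrow> 'a \<Rightarrow> 'a \<Rightarrow> 'a set set" where
  "twin_replace E u v = {e \<in> E. v \<notin> e} \<union> {{v, x} | x. {u, x} \<in> E \<and> x \<noteq> v}"

end

theory Submission
  imports Defs "HOL-Combinatorics.Transposition"
begin

text \<open>Zykov symmetrisation. Fix a colouring \<open>\<chi>\<close> of the edges of \<open>G - u - v\<close> and let
  \<open>a \<chi>\<close>, \<open>b \<chi>\<close> count its pattern-free extensions to \<open>G - v\<close> and to \<open>G - u\<close>.
  As \<open>u\<close> and \<open>v\<close> are nonadjacent, every copy of the pattern misses \<open>u\<close> or \<open>v\<close>, so a colouring
  of \<open>G\<close> is pattern-free iff both of its restrictions are, and \<open>c(G) = \<Sum> a b\<close>.
  The twin graph \<open>G'\<close> has \<open>G' - v = G - v\<close>, and the transposition of \<open>u\<close> and \<open>v\<close> maps \<open>G - v\<close>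
  onto \<open>G' - u\<close> fixing \<open>G - u - v\<close>; hence \<open>c(G') = \<Sum> a\<^sup>2\<close>, and symmetrically
  \<open>c(G'') = \<Sum> b\<^sup>2\<close> when \<open>u\<close> is replaced by a twin of \<open>v\<close>. Since \<open>2 \<Sum> a b \<le> \<Sum> a\<^sup>2 + \<Sum> b\<^sup>2\<close>
  and both \<open>c(G')\<close>, \<open>c(G'')\<close> are at most the extremal value \<open>c(G)\<close>, equality is forced.\<close>

section \<open>Copies of the pattern\<close>

definition clique_in :: "'a set set \<Rightarrow> 'a set \<Rightarrow> bool" where
  "clique_in E S \<longleftrightarrow> (\<forall>x\<in>S. \<forall>y\<in>S. x \<noteq> y \<longrightarrow> {x, y} \<in> E)"

definition realizes_pattern :: "nat \<Rightarrow> (nat set \<Rightarrow> nat) \<Rightarrow> ('a set \<Rightarrow> nat) \<Rightarrow> 'a set \<Rightarrow> ('a \<Rightarrow> nat) \<Rightarrow> bool" where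
  "realizes_pattern k F c S \<phi> \<longleftrightarrow> bij_betw \<phi> S {0..<k} \<and>
     (\<forall>x\<in>S. \<forall>y\<in>S. \<forall>x'\<in>S. \<forall>y'\<in>S. x \<noteq> y \<longrightarrow> x' \<noteq> y' \<longrightarrow>
        (c {x, y} = c {x', y'} \<longleftrightarrow> F {\<phi> x, \<phi> y} = F {\<phi> x', \<phi> y'}))"

lemma has_copy_iff: "has_copy k F E c \<longleftrightarrow> (\<exists>S \<phi>. clique_in E S \<and> realizes_pattern k F c S \<phi>)"
  unfolding has_copy_def clique_in_def realizes_pattern_def by blast

lemma clique_in_mono: "clique_in E S \<Longrightarrow> E \<subseteq> E' \<Longrightarrow> clique_in E' S"
  unfolding clique_in_def by blast

lemma clique_subset_Union:
  assumes "clique_in E S" and "card S \<ge> 2"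
  shows "S \<subseteq> \<Union>E"
proof
  fix x assume "x \<in> S"
  have "finite S" using assms(2) card.infinite by fastforce
  then obtain y where "y \<in> S" "y \<noteq> x"
    using assms(2) \<open>x \<in> S\<close> by (metis card_le_Suc0_iff_eq not_less_eq_eq numeral_2_eq_2)
  then show "x \<in> \<Union>E" using assms(1) \<open>x \<in> S\<close> unfolding clique_in_def by blast
qed

lemma realizes_pattern_cong:
  assumes "clique_in E S" and "\<forall>e\<in>E. c e = c' e"
  shows "realizes_pattern k F c S \<phi> \<longleftrightarrow> realizes_pattern k F c' S \<phi>"
proof -
  have "c {x, y} = c' {x, y}" if "x \<in> S" "y \<in> S" "x \<noteq> y" for x y
    using assms that unfolding clique_in_def by blast
  then show ?thesis unfolding realizes_pattern_def by simp
qed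

lemma has_copy_cong: "\<forall>e\<in>E. c e = c' e \<Longrightarrow> has_copy k F E c \<longleftrightarrow> has_copy k F E c'"
  unfolding has_copy_iff using realizes_pattern_cong by blast

lemma has_copy_mono: "has_copy k F E c \<Longrightarrow> E \<subseteq> E' \<Longrightarrow> has_copy k F E' c"
  unfolding has_copy_iff using clique_in_mono by blast

lemma has_copy_image:
  assumes "inj_on f (\<Union>E)" and "k \<ge> 2" and "has_copy k F E (\<lambda>e. c (f ` e))"
  shows "has_copy k F ((`) f ` E) c"
proof -
  obtain S \<phi> where S: "clique_in E S" "realizes_pattern k F (\<lambda>e. c (f ` e)) S \<phi>"
    using assms(3) unfolding has_copy_iff by blast
  have "card S = k"
    using S(2) unfolding realizes_pattern_def by (metis bij_betw_same_card card_atLeastLessThan diff_zero)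
  then have "inj_on f S" using clique_subset_Union[OF S(1)] assms(1,2) inj_on_subset by auto
  define \<psi> where "\<psi> = \<phi> \<circ> the_inv_into S f"
  have \<psi>: "\<psi> (f x) = \<phi> x" if "x \<in> S" for x
    using that \<open>inj_on f S\<close> by (simp add: \<psi>_def the_inv_into_f_f)
  have "bij_betw \<psi> (f ` S) {0..<k}"
    using S(2) \<open>inj_on f S\<close> unfolding \<psi>_def realizes_pattern_def
    by (meson bij_betw_the_inv_into bij_betw_trans inj_on_imp_bij_betw)
  moreover have "c {x2, y2} = c {x2', y2'} \<longleftrightarrow> F {\<psi> x2, \<psi> y2} = F {\<psi> x2', \<psi> y2'}"
    if images: "x2 \<in> f ` S" "y2 \<in> f ` S" "x2' \<in> f ` S" "y2' \<in> f ` S" "x2 \<noteq> y2" "x2' \<noteq> y2'"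
    for x2 y2 x2' y2'
  proof -
    obtain x y x' y' where "x \<in> S" "y \<in> S" "x' \<in> S" "y' \<in> S"
      and "x2 = f x" "y2 = f y" "x2' = f x'" "y2' = f y'"
      using images(1-4) by blast
    moreover have "x \<noteq> y" "x' \<noteq> y'" using images(5,6) calculation by auto
    ultimately show ?thesis using S(2) \<psi> unfolding realizes_pattern_def by simp
  qed
  ultimately have "realizes_pattern k F c (f ` S) \<psi>" unfolding realizes_pattern_def by blast
  moreover have "clique_in ((`) f ` E) (f ` S)"
    unfolding clique_in_def
  proof (intro ballI impI)
    fix x2 y2 assume "x2 \<in> f ` S" "y2 \<in> f ` S" "x2 \<noteq> y2"
    then obtain x y where "x \<in> S" "y \<in> S" "x \<noteq> y" "x2 = f x" "y2 = f y" by blast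
    then show "{x2, y2} \<in> (`) f ` E"
      using S(1) unfolding clique_in_def by (auto intro: image_eqI[where x = "{x, y}"])
  qed
  ultimately show ?thesis unfolding has_copy_iff by blast
qed

section \<open>Counting colourings through a nonadjacent pair\<close>

definition del_vertex :: "'a \<Rightarrow> 'a set set \<Rightarrow> 'a set set" where
  "del_vertex w E = {e \<in> E. w \<notin> e}"

lemma del_vertex_commute: "del_vertex u (del_vertex v E) = del_vertex v (del_vertex u E)"
  unfolding del_vertex_def by blast

lemma del_vertex_nonadjacent_cover:
  assumes "\<forall>e\<in>E. card e = 2" and "u \<noteq> v" and "{u, v} \<notin> E"
  shows "del_vertex v E \<union> del_vertex u E = E"
proof -
  have "e = {u, v}" if "e \<in> E" "u \<in> e" "v \<in> e" for e
  proof (rule card_subset_eq[symmetric])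
    show "finite e" "card {u, v} = card e" using that(1) assms(1,2) card.infinite by fastforce+
  qed (use that in blast)
  then show ?thesis using assms(3) unfolding del_vertex_def by blast
qed

lemma has_copy_nonadjacent_split:
  assumes "u \<noteq> v" and "{u, v} \<notin> E"
  shows "has_copy k F E c \<longleftrightarrow> has_copy k F (del_vertex v E) c \<or> has_copy k F (del_vertex u E) c"
proof
  assume "has_copy k F E c"
  then obtain S \<phi> where S: "clique_in E S" "realizes_pattern k F c S \<phi>"
    unfolding has_copy_iff by blast
  have "u \<notin> S \<or> v \<notin> S"
    using S(1) assms unfolding clique_in_def by blast
  then have "clique_in (del_vertex v E) S \<or> clique_in (del_vertex u E) S"
    using S(1) unfolding clique_in_def del_vertex_def by auto
  then show "has_copy k F (del_vertex v E) c \<or> has_copy k F (del_vertex u E) c"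
    using S(2) unfolding has_copy_iff by blast
next
  assume "has_copy k F (del_vertex v E) c \<or> has_copy k F (del_vertex u E) c"
  then show "has_copy k F E c" unfolding del_vertex_def by (auto elim: has_copy_mono)
qed

definition extensions :: "'e set \<Rightarrow> ('e \<Rightarrow> 'b) set \<Rightarrow> ('e \<Rightarrow> 'b) \<Rightarrow> ('e \<Rightarrow> 'b) set" where
  "extensions C X \<chi> = {\<alpha> \<in> X. restrict \<alpha> C = \<chi>}"

lemma bij_betw_restrict_pair:
  "bij_betw (\<lambda>c. (restrict c A, restrict c B)) (A \<union> B \<rightarrow>\<^sub>E Z)
     {(\<alpha>, \<beta>). \<alpha> \<in> A \<rightarrow>\<^sub>E Z \<and> \<beta> \<in> B \<rightarrow>\<^sub>E Z \<and> restrict \<alpha> (A \<inter> B) = restrict \<beta> (A \<inter> B)}"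
  (is "bij_betw ?split _ ?pairs")
proof -
  let ?glue = "\<lambda>(\<alpha>, \<beta>). \<lambda>e \<in> A \<union> B. if e \<in> A then \<alpha> e else \<beta> e"
  have "?glue (?split c) = c" if c: "c \<in> A \<union> B \<rightarrow>\<^sub>E Z" for c
    using PiE_arb[OF c] by (auto simp: fun_eq_iff)
  moreover have "?split (?glue p) = p" if "p \<in> ?pairs" for p
  proof -
    obtain \<alpha> \<beta> where p: "p = (\<alpha>, \<beta>)" and \<alpha>: "\<alpha> \<in> A \<rightarrow>\<^sub>E Z" and \<beta>: "\<beta> \<in> B \<rightarrow>\<^sub>E Z"
      and agree: "restrict \<alpha> (A \<inter> B) = restrict \<beta> (A \<inter> B)"
      using \<open>p \<in> ?pairs\<close> by blast
    have "\<alpha> e = \<beta> e" if "e \<in> A \<inter> B" for e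
      using fun_cong[OF agree, of e] that by simp
    then show ?thesis
      unfolding p using PiE_arb[OF \<alpha>] PiE_arb[OF \<beta>] by (auto simp: fun_eq_iff)
  qed
  ultimately show ?thesis
    by (intro bij_betw_byWitness[where f' = ?glue]) auto
qed

lemma bij_betw_restrict_pair_Collect:
  assumes "X \<subseteq> A \<rightarrow>\<^sub>E Z" and "Y \<subseteq> B \<rightarrow>\<^sub>E Z"
  shows "bij_betw (\<lambda>c. (restrict c A, restrict c B)) {c \<in> A \<union> B \<rightarrow>\<^sub>E Z. restrict c A \<in> X \<and> restrict c B \<in> Y}
     {(\<alpha>, \<beta>). \<alpha> \<in> X \<and> \<beta> \<in> Y \<and> restrict \<alpha> (A \<inter> B) = restrict \<beta> (A \<inter> B)}"
proof -
  have "{p \<in> {(\<alpha>, \<beta>). \<alpha> \<in> A \<rightarrow>\<^sub>E Z \<and> \<beta> \<in> B \<rightarrow>\<^sub>E Z \<and> restrict \<alpha> (A \<inter> B) = restrict \<beta> (A \<inter> B)}.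
      fst p \<in> X \<and> snd p \<in> Y}
    = {(\<alpha>, \<beta>). \<alpha> \<in> X \<and> \<beta> \<in> Y \<and> restrict \<alpha> (A \<inter> B) = restrict \<beta> (A \<inter> B)}"
    using assms by auto
  moreover have "bij_betw (\<lambda>c. (restrict c A, restrict c B))
      {c \<in> A \<union> B \<rightarrow>\<^sub>E Z. restrict c A \<in> X \<and> restrict c B \<in> Y}
      {p \<in> {(\<alpha>, \<beta>). \<alpha> \<in> A \<rightarrow>\<^sub>E Z \<and> \<beta> \<in> B \<rightarrow>\<^sub>E Z \<and> restrict \<alpha> (A \<inter> B) = restrict \<beta> (A \<inter> B)}.
         fst p \<in> X \<and> snd p \<in> Y}"
    by (rule bij_betw_Collect[OF bij_betw_restrict_pair]) simp
  ultimately show ?thesis by simp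
qed

lemma card_agreeing_pairs:
  assumes "finite X" and "finite Y" and "finite C" and "finite Z" and "X \<subseteq> A \<rightarrow>\<^sub>E Z" and "C \<subseteq> A"
  shows "card {(\<alpha>, \<beta>). \<alpha> \<in> X \<and> \<beta> \<in> Y \<and> restrict \<alpha> C = restrict \<beta> C}
    = (\<Sum>\<chi> \<in> C \<rightarrow>\<^sub>E Z. card (extensions C X \<chi>) * card (extensions C Y \<chi>))"
proof -
  have restrict_mem: "restrict \<alpha> C \<in> C \<rightarrow>\<^sub>E Z" if "\<alpha> \<in> X" for \<alpha>
    using that assms(5,6) by (auto simp: PiE_iff)
  have "{(\<alpha>, \<beta>). \<alpha> \<in> X \<and> \<beta> \<in> Y \<and> restrict \<alpha> C = restrict \<beta> C}
      = (\<Union>\<chi> \<in> C \<rightarrow>\<^sub>E Z. extensions C X \<chi> \<times> extensions C Y \<chi>)" (is "?P = ?U")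
  proof
    show "?P \<subseteq> ?U"
    proof clarify
      fix \<alpha> \<beta> assume "\<alpha> \<in> X" "\<beta> \<in> Y" "restrict \<alpha> C = restrict \<beta> C"
      then have "\<alpha> \<in> extensions C X (restrict \<alpha> C)" "\<beta> \<in> extensions C Y (restrict \<alpha> C)"
        unfolding extensions_def by simp_all
      then show "(\<alpha>, \<beta>) \<in> ?U" by (intro UN_I[OF restrict_mem[OF \<open>\<alpha> \<in> X\<close>]] SigmaI)
    qed
  qed (auto simp: extensions_def)
  moreover have "finite (extensions C X \<chi>)" "finite (extensions C Y \<chi>)" for \<chi>
    using assms(1,2) unfolding extensions_def by auto
  ultimately show ?thesis
    using assms(3,4)
    by (simp add: card_UN_disjoint finite_PiE card_cartesian_product disjoint_iff extensions_def)
qed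

lemma finite_free_colorings: "finite E \<Longrightarrow> finite (free_colorings r k F E)"
  unfolding free_colorings_def by (rule finite_subset[of _ "E \<rightarrow>\<^sub>E {1..r}"]) (auto intro: finite_PiE)

lemma free_colorings_subset: "free_colorings r k F E \<subseteq> E \<rightarrow>\<^sub>E {1..r}"
  unfolding free_colorings_def by blast

lemma restrict_in_free_colorings:
  assumes "c \<in> E \<rightarrow>\<^sub>E {1..r}" and "D \<subseteq> E"
  shows "restrict c D \<in> free_colorings r k F D \<longleftrightarrow> \<not> has_copy k F D c"
  using assms has_copy_cong[of D "restrict c D" c] unfolding free_colorings_def by auto

lemma free_colorings_nonadjacent:
  assumes "u \<noteq> v" and "{u, v} \<notin> E"
  shows "free_colorings r k F E = {c \<in> E \<rightarrow>\<^sub>E {1..r}.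
    restrict c (del_vertex v E) \<in> free_colorings r k F (del_vertex v E) \<and>
    restrict c (del_vertex u E) \<in> free_colorings r k F (del_vertex u E)}"
proof -
  have "del_vertex v E \<subseteq> E" "del_vertex u E \<subseteq> E" unfolding del_vertex_def by auto
  then show ?thesis
    using has_copy_nonadjacent_split[OF assms] restrict_in_free_colorings
    unfolding free_colorings_def[of r k F E] by blast
qed

lemma c_graph_nonadjacent_split:
  assumes "\<forall>e\<in>E. card e = 2" and "finite E" and "u \<noteq> v" and "{u, v} \<notin> E"
  defines "E\<^sub>0 \<equiv> del_vertex u (del_vertex v E)"
  shows "c_graph r k F E = (\<Sum>\<chi> \<in> E\<^sub>0 \<rightarrow>\<^sub>E {1..r}.
           card (extensions E\<^sub>0 (free_colorings r k F (del_vertex v E)) \<chi>) *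
           card (extensions E\<^sub>0 (free_colorings r k F (del_vertex u E)) \<chi>))"
proof -
  let ?Dv = "del_vertex v E" and ?Du = "del_vertex u E"
  have cover: "?Dv \<union> ?Du = E" by (rule del_vertex_nonadjacent_cover[OF assms(1,3,4)])
  have meet: "?Dv \<inter> ?Du = E\<^sub>0" unfolding E\<^sub>0_def del_vertex_def by blast
  have "bij_betw (\<lambda>c. (restrict c ?Dv, restrict c ?Du))
      {c \<in> ?Dv \<union> ?Du \<rightarrow>\<^sub>E {1..r}.
         restrict c ?Dv \<in> free_colorings r k F ?Dv \<and> restrict c ?Du \<in> free_colorings r k F ?Du}
      {(\<alpha>, \<beta>). \<alpha> \<in> free_colorings r k F ?Dv \<and> \<beta> \<in> free_colorings r k F ?Du \<and>
         restrict \<alpha> (?Dv \<inter> ?Du) = restrict \<beta> (?Dv \<inter> ?Du)}"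
    by (intro bij_betw_restrict_pair_Collect free_colorings_subset)
  then have "c_graph r k F E = card {(\<alpha>, \<beta>). \<alpha> \<in> free_colorings r k F ?Dv \<and>
      \<beta> \<in> free_colorings r k F ?Du \<and> restrict \<alpha> E\<^sub>0 = restrict \<beta> E\<^sub>0}"
    unfolding c_graph_def free_colorings_nonadjacent[OF assms(3,4)] cover meet by (rule bij_betw_same_card)
  also have "\<dots> = (\<Sum>\<chi> \<in> E\<^sub>0 \<rightarrow>\<^sub>E {1..r}.
           card (extensions E\<^sub>0 (free_colorings r k F ?Dv) \<chi>) *
           card (extensions E\<^sub>0 (free_colorings r k F ?Du) \<chi>))"
  proof (rule card_agreeing_pairs[where A = ?Dv])
    show "finite (free_colorings r k F ?Dv)" "finite (free_colorings r k F ?Du)" "finite E\<^sub>0"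
      using assms(2) unfolding E\<^sub>0_def del_vertex_def by (simp_all add: finite_free_colorings)
    show "E\<^sub>0 \<subseteq> ?Dv" unfolding E\<^sub>0_def del_vertex_def by blast
    show "free_colorings r k F ?Dv \<subseteq> ?Dv \<rightarrow>\<^sub>E {1..r}" by (rule free_colorings_subset)
  qed simp
  finally show ?thesis .
qed

section \<open>Relabelling vertices\<close>

lemma free_colorings_pullback:
  assumes "inj_on f (\<Union>E)" and "k \<ge> 2" and "c \<in> free_colorings r k F ((`) f ` E)"
  shows "restrict (\<lambda>e. c (f ` e)) E \<in> free_colorings r k F E"
proof -
  have "\<not> has_copy k F E (\<lambda>e. c (f ` e))"
    using has_copy_image[OF assms(1,2)] assms(3) unfolding free_colorings_def by blast
  moreover have "c (f ` e) \<in> {1..r}" if "e \<in> E" for e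
    using assms(3) that unfolding free_colorings_def by blast
  moreover have "has_copy k F E (restrict (\<lambda>e. c (f ` e)) E) \<longleftrightarrow> has_copy k F E (\<lambda>e. c (f ` e))"
    by (rule has_copy_cong) simp
  ultimately show ?thesis unfolding free_colorings_def by simp
qed

lemma inj_on_pullback: "inj_on (\<lambda>c. restrict (\<lambda>e. c (f ` e)) E) ((`) f ` E \<rightarrow>\<^sub>E Z)"
proof (rule inj_onI)
  fix c c' assume c: "c \<in> (`) f ` E \<rightarrow>\<^sub>E Z" and c': "c' \<in> (`) f ` E \<rightarrow>\<^sub>E Z"
    and eq: "restrict (\<lambda>e. c (f ` e)) E = restrict (\<lambda>e. c' (f ` e)) E"
  have "c (f ` e) = c' (f ` e)" if "e \<in> E" for e
    using fun_cong[OF eq, of e] that by simp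
  then show "c = c'" using c c' by (auto intro: PiE_ext)
qed

lemma card_extensions_image_le:
  assumes "inj_on f (\<Union>E)" and "k \<ge> 2" and "finite E"
    and "C \<subseteq> E" and "\<forall>e\<in>C. f ` e = e"
  shows "card (extensions C (free_colorings r k F ((`) f ` E)) \<chi>)
    \<le> card (extensions C (free_colorings r k F E) \<chi>)"
proof (rule card_inj_on_le)
  let ?pull = "\<lambda>c. restrict (\<lambda>e. c (f ` e)) E"
  have "extensions C (free_colorings r k F ((`) f ` E)) \<chi> \<subseteq> (`) f ` E \<rightarrow>\<^sub>E {1..r}"
    using free_colorings_subset unfolding extensions_def by blast
  then show "inj_on ?pull (extensions C (free_colorings r k F ((`) f ` E)) \<chi>)"
    by (rule inj_on_subset[OF inj_on_pullback])
  show "finite (extensions C (free_colorings r k F E) \<chi>)"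
    using finite_free_colorings[OF assms(3)] unfolding extensions_def by simp
  have "restrict (?pull c) C = restrict c C" for c :: "'a set \<Rightarrow> nat"
    using assms(4,5) by (auto simp: fun_eq_iff)
  then show "?pull ` extensions C (free_colorings r k F ((`) f ` E)) \<chi>
      \<subseteq> extensions C (free_colorings r k F E) \<chi>"
    using free_colorings_pullback[OF assms(1,2)] unfolding extensions_def by auto
qed

lemma c_graph_image_le:
  assumes "inj_on f (\<Union>E)" and "k \<ge> 2" and "finite E"
  shows "c_graph r k F ((`) f ` E) \<le> c_graph r k F E"
  unfolding c_graph_def
proof (rule card_inj_on_le)
  show "inj_on (\<lambda>c. restrict (\<lambda>e. c (f ` e)) E) (free_colorings r k F ((`) f ` E))"
    by (rule inj_on_subset[OF inj_on_pullback free_colorings_subset])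
qed (use free_colorings_pullback[OF assms(1,2)] finite_free_colorings[OF assms(3)] in auto)

lemma c_graph_image:
  assumes "inj_on f (\<Union>E)" and "k \<ge> 2" and "finite E"
  shows "c_graph r k F ((`) f ` E) = c_graph r k F E"
proof (rule antisym)
  show "c_graph r k F ((`) f ` E) \<le> c_graph r k F E"
    by (rule c_graph_image_le[OF assms])
  define g where "g = the_inv_into (\<Union>E) f"
  have "g ` f ` e = e" if "e \<in> E" for e
    using that the_inv_into_f_f[OF assms(1)] unfolding g_def by (force simp: image_image)
  then have "(`) g ` (`) f ` E = E" by (force simp: image_image)
  moreover have "inj_on g (\<Union>((`) f ` E))"
    unfolding g_def image_Union[symmetric] using assms(1) by (rule inj_on_the_inv_into)
  ultimately show "c_graph r k F E \<le> c_graph r k F ((`) f ` E)"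
    using c_graph_image_le[of g "(`) f ` E" k r F] assms(2,3) by simp
qed

lemma card_extensions_transpose:
  assumes "k \<ge> 2" and "finite D" and "C \<subseteq> D" and "\<forall>e\<in>C. u \<notin> e \<and> v \<notin> e"
  shows "card (extensions C (free_colorings r k F ((`) (Transposition.transpose u v) ` D)) \<chi>)
    = card (extensions C (free_colorings r k F D) \<chi>)"
proof -
  let ?\<tau> = "Transposition.transpose u v"
  have fixes_C: "\<forall>e\<in>C. ?\<tau> ` e = e" using assms(4) by (auto simp: image_iff)
  have involution: "(`) ?\<tau> ` (`) ?\<tau> ` D = D" by (simp add: image_image)
  have "C \<subseteq> (`) ?\<tau> ` D"
  proof
    fix e assume "e \<in> C"
    then have "e = ?\<tau> ` e" "e \<in> D" using assms(3) fixes_C by auto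
    then show "e \<in> (`) ?\<tau> ` D" by (rule image_eqI)
  qed
  then have "card (extensions C (free_colorings r k F D) \<chi>)
      \<le> card (extensions C (free_colorings r k F ((`) ?\<tau> ` D)) \<chi>)"
    using card_extensions_image_le[of ?\<tau> "(`) ?\<tau> ` D" k C r F \<chi>] assms(1,2) fixes_C
    unfolding involution by simp
  moreover have "card (extensions C (free_colorings r k F ((`) ?\<tau> ` D)) \<chi>)
      \<le> card (extensions C (free_colorings r k F D) \<chi>)"
    using card_extensions_image_le[of ?\<tau> D k C r F \<chi>] assms(1-3) fixes_C by simp
  ultimately show ?thesis by (rule antisym[rotated])
qed

section \<open>Twin replacement\<close>

lemma twin_replace_del_vertex:
  "del_vertex v (twin_replace E u v) = del_vertex v E"
  unfolding twin_replace_def del_vertex_def by blast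

lemma card_2_obtain_other: "card e = 2 \<Longrightarrow> u \<in> e \<Longrightarrow> \<exists>x. x \<noteq> u \<and> e = {u, x}"
  by (metis card_2_iff insert_commute insertE singletonD)

lemma twin_replace_del_twin:
  assumes "\<forall>e\<in>E. card e = 2" and "u \<noteq> v" and "{u, v} \<notin> E"
  shows "del_vertex u (twin_replace E u v) = (`) (Transposition.transpose u v) ` del_vertex v E"
proof -
  let ?\<tau> = "Transposition.transpose u v"
  have fixed: "?\<tau> ` e = e" if "u \<notin> e" "v \<notin> e" for e
    using that by (auto simp: image_iff)
  have moved: "?\<tau> ` {u, x} = {v, x}" if "x \<noteq> u" "x \<noteq> v" for x
    using that by simp
  show ?thesis
  proof (intro set_eqI iffI)
    fix e assume "e \<in> del_vertex u (twin_replace E u v)"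
    then consider "e \<in> E" "u \<notin> e" "v \<notin> e" | x where "e = {v, x}" "{u, x} \<in> E" "x \<noteq> v"
      unfolding twin_replace_def del_vertex_def by blast
    then show "e \<in> (`) ?\<tau> ` del_vertex v E"
    proof cases
      case 1
      then have "e = ?\<tau> ` e" "e \<in> del_vertex v E" using fixed unfolding del_vertex_def by auto
      then show ?thesis by (rule image_eqI)
    next
      case (2 x)
      have "x \<noteq> u" using 2(2) assms(1) by fastforce
      then have "e = ?\<tau> ` {u, x}" "{u, x} \<in> del_vertex v E"
        using 2 moved assms(2) unfolding del_vertex_def by auto
      then show ?thesis by (rule image_eqI)
    qed
  next
    fix e assume "e \<in> (`) ?\<tau> ` del_vertex v E"
    then obtain d where d: "d \<in> E" "v \<notin> d" "e = ?\<tau> ` d" unfolding del_vertex_def by blast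
    show "e \<in> del_vertex u (twin_replace E u v)"
    proof (cases "u \<in> d")
      case True
      then obtain x where "x \<noteq> u" "d = {u, x}" using card_2_obtain_other[of d u] assms(1) d(1) by blast
      then show ?thesis using d moved assms(2) unfolding twin_replace_def del_vertex_def by auto
    next
      case False
      then show ?thesis using d fixed unfolding twin_replace_def del_vertex_def by auto
    qed
  qed
qed

lemma twin_replace_nonadjacent:
  assumes "\<forall>e\<in>E. card e = 2" and "{u, v} \<notin> E"
  shows "{u, v} \<notin> twin_replace E u v"
proof
  assume "{u, v} \<in> twin_replace E u v"
  then obtain x where "{u, v} = {v, x}" "{u, x} \<in> E" "x \<noteq> v"
    using assms(2) unfolding twin_replace_def by blast
  then have "{u} \<in> E" by (auto simp: doubleton_eq_iff)
  then show False using assms(1) by fastforce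
qed

lemma twin_replace_card_edges:
  assumes "\<forall>e\<in>E. card e = 2"
  shows "\<forall>e\<in>twin_replace E u v. card e = 2"
  using assms unfolding twin_replace_def by auto

lemma finite_twin_replace:
  assumes "\<forall>e\<in>E. card e = 2" and "finite E"
  shows "finite (twin_replace E u v)"
proof -
  have "finite (\<Union>E)" using assms by (metis card.infinite finite_Union zero_neq_numeral)
  moreover have "{{v, x} | x. {u, x} \<in> E \<and> x \<noteq> v} \<subseteq> (\<lambda>x. {v, x}) ` \<Union>E" by blast
  ultimately have "finite {{v, x} | x. {u, x} \<in> E \<and> x \<noteq> v}" by (meson finite_imageI finite_subset)
  then show ?thesis unfolding twin_replace_def using assms(2) by simp
qed

lemma c_graph_twin_replace:
  assumes "\<forall>e\<in>E. card e = 2" and "finite E" and "u \<noteq> v" and "{u, v} \<notin> E" and "k \<ge> 2"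
  defines "E\<^sub>0 \<equiv> del_vertex u (del_vertex v E)"
  shows "c_graph r k F (twin_replace E u v)
    = (\<Sum>\<chi> \<in> E\<^sub>0 \<rightarrow>\<^sub>E {1..r}. card (extensions E\<^sub>0 (free_colorings r k F (del_vertex v E)) \<chi>) ^ 2)"
proof -
  let ?E' = "twin_replace E u v"
  have "card (extensions E\<^sub>0 (free_colorings r k F (del_vertex u ?E')) \<chi>)
      = card (extensions E\<^sub>0 (free_colorings r k F (del_vertex v E)) \<chi>)" for \<chi>
    unfolding twin_replace_del_twin[OF assms(1,3,4)] E\<^sub>0_def
    by (rule card_extensions_transpose) (use assms(2,5) in \<open>auto simp: del_vertex_def\<close>)
  moreover have "c_graph r k F ?E' = (\<Sum>\<chi> \<in> E\<^sub>0 \<rightarrow>\<^sub>E {1..r}.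
      card (extensions E\<^sub>0 (free_colorings r k F (del_vertex v E)) \<chi>) *
      card (extensions E\<^sub>0 (free_colorings r k F (del_vertex u ?E')) \<chi>))"
    using c_graph_nonadjacent_split[OF twin_replace_card_edges[OF assms(1)] finite_twin_replace[OF assms(1,2)]
        assms(3) twin_replace_nonadjacent[OF assms(1,4)]]
    unfolding twin_replace_del_vertex E\<^sub>0_def .
  ultimately show ?thesis by (simp add: power2_eq_square)
qed

lemma simple_graph_finite_edges: "simple_graph V E \<Longrightarrow> finite E"
  unfolding simple_graph_def by (auto intro: finite_subset[of E "Pow V"])

lemma simple_graph_image:
  assumes "simple_graph V E" and "inj_on f V"
  shows "simple_graph (f ` V) ((`) f ` E)"
  using assms unfolding simple_graph_def by (auto simp: card_image inj_on_subset)

lemma simple_graph_twin_replace: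
  assumes "simple_graph V E" and "v \<in> V"
  shows "simple_graph V (twin_replace E u v)"
  using assms unfolding simple_graph_def twin_replace_def by auto

lemma c_graph_le_c_num:
  fixes E :: "'a set set"
  assumes "simple_graph V E" and "k \<ge> 2"
  shows "c_graph r k F E \<le> c_num r k F (card V)"
proof -
  have "finite V" using assms(1) unfolding simple_graph_def by blast
  then obtain f where f: "bij_betw f V {0..<card V}" using ex_bij_betw_finite_nat by blast
  then have "simple_graph {0..<card V} ((`) f ` E)"
    using simple_graph_image[OF assms(1)] by (metis bij_betw_def)
  moreover have "finite {c_graph r k F E' | E' :: nat set set. simple_graph {0..<card V} E'}"
    by (rule finite_subset[of _ "c_graph r k F ` Pow (Pow {0..<card V})"]) (auto simp: simple_graph_def)
  ultimately have "c_graph r k F ((`) f ` E) \<le> c_num r k F (card V)"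
    unfolding c_num_def by (blast intro: Max_ge)
  moreover have "inj_on f (\<Union>E)"
    using f assms(1) unfolding simple_graph_def bij_betw_def by (blast intro: inj_on_subset)
  ultimately show ?thesis
    using c_graph_image assms(2) simple_graph_finite_edges[OF assms(1)] by metis
qed

lemma two_mult_le_sum_squares: "2 * (a * b) \<le> a ^ 2 + (b :: nat) ^ 2"
proof -
  have "0 \<le> (int a - int b) ^ 2" by simp
  then have "int (2 * (a * b)) \<le> int (a ^ 2 + b ^ 2)" by (simp add: power2_eq_square algebra_simps)
  then show ?thesis by linarith
qed

theorem corollary2p9:
  fixes r k :: nat and F :: "nat set \<Rightarrow> nat" and V :: "'a set" and E :: "'a set set" and u v :: 'a
  assumes "r \<ge> 2" and "k \<ge> 3"
    and "pattern_coloring r k F"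
    and "extremal r k F V E"
    and "u \<in> V" and "v \<in> V" and "u \<noteq> v" and "{u, v} \<notin> E"
  shows "extremal r k F V (twin_replace E u v)"
proof -
  have graph: "simple_graph V E" and optimal: "c_graph r k F E = c_num r k F (card V)"
    using assms(4) unfolding extremal_def by blast+
  have edges: "\<forall>e\<in>E. card e = 2" and "finite E"
    using graph simple_graph_finite_edges unfolding simple_graph_def by blast+
  have "k \<ge> 2" using assms(2) by simp
  define E\<^sub>0 where "E\<^sub>0 = del_vertex u (del_vertex v E)"
  define a where "a \<chi> = card (extensions E\<^sub>0 (free_colorings r k F (del_vertex v E)) \<chi>)" for \<chi>
  define b where "b \<chi> = card (extensions E\<^sub>0 (free_colorings r k F (del_vertex u E)) \<chi>)" for \<chi>
  let ?N = "c_num r k F (card V)" and ?X = "E\<^sub>0 \<rightarrow>\<^sub>E {1..r}"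
  have "(\<Sum>\<chi>\<in>?X. a \<chi> * b \<chi>) = ?N"
    using c_graph_nonadjacent_split[OF edges \<open>finite E\<close> assms(7,8)] optimal
    unfolding a_def b_def E\<^sub>0_def by simp
  moreover have "(\<Sum>\<chi>\<in>?X. a \<chi> ^ 2) = c_graph r k F (twin_replace E u v)"
    using c_graph_twin_replace[OF edges \<open>finite E\<close> assms(7,8) \<open>k \<ge> 2\<close>]
    unfolding a_def E\<^sub>0_def by simp
  moreover have "(\<Sum>\<chi>\<in>?X. b \<chi> ^ 2) = c_graph r k F (twin_replace E v u)"
    using c_graph_twin_replace[OF edges \<open>finite E\<close> assms(7)[symmetric] _ \<open>k \<ge> 2\<close>] assms(8)
    unfolding b_def E\<^sub>0_def by (simp add: del_vertex_commute insert_commute)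
  moreover have "c_graph r k F (twin_replace E u v) \<le> ?N" "c_graph r k F (twin_replace E v u) \<le> ?N"
    using graph assms(5,6) \<open>k \<ge> 2\<close> by (simp_all add: c_graph_le_c_num simple_graph_twin_replace)
  moreover have "2 * (\<Sum>\<chi>\<in>?X. a \<chi> * b \<chi>) \<le> (\<Sum>\<chi>\<in>?X. a \<chi> ^ 2) + (\<Sum>\<chi>\<in>?X. b \<chi> ^ 2)"
    unfolding sum_distrib_left sum.distrib[symmetric] by (intro sum_mono two_mult_le_sum_squares)
  ultimately have "c_graph r k F (twin_replace E u v) = ?N" by linarith
  then show ?thesis
    unfolding extremal_def using simple_graph_twin_replace[OF graph assms(6)] by blast
qed

end
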